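(* Let $d\ge1$, $x_1<x_2$, $x_0\in[x_1,x_2]$, let $p,q,r_1,\dots,r_d,s_1,\dots,s_d$ be functions on $[x_1,x_2]$, $Ly=(py')'+qy$, $R_i[y]=r_iy+s_iy'$, and let $u_0$ be a nonvanishing function on $[x_1,x_2]$ with $Lu_0=0$. Then for every $\mathbf n\in\mathbb Z_{\ge0}^d$, $$L\big[u_0\tilde X^{(2\mathbf n)}\big]=2|\mathbf n|(2|\mathbf n|-1)\sum_{i=1}^dR_i\big[u_0\tilde X^{(2\mathbf n-2\delta_i)}\big]$$ and $$L\big[u_0X^{(2\mathbf n+\frac1d\mathbf 1)}\big]=(2|\mathbf n|+1)(2|\mathbf n|)\sum_{i=1}^dR_i\big[u_0X^{(2\mathbf n-2\delta_i+\frac1d\mathbf 1)}\big].$$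
   Context: Notation: $\int f$ denotes $x\mapsto\int_{x_0}^x f(s)\,ds$; $|\mathbf j|=j_1+\cdots+j_d$; $\delta_i$ the $i$-th standard basis vector; $\mathbf 1=(1,\dots,1)$. Generalized formal powers $\tilde X$: for $\mathbf j\in\mathbb Z^d$, admissible means at most one $j_i$ odd; $\tilde X^{(\mathbf 0)}\equiv1$; $\tilde X^{(\mathbf j)}\equiv0$ if some $j_i<0$; for admissible $\mathbf j\ge0$, $\mathbf j\ne\mathbf0$: if $|\mathbf j|$ is odd with odd entry $j_i$, $\tilde X^{(\mathbf j)}=|\mathbf j|\int u_0R_i[u_0\tilde X^{(\mathbf j-\delta_i)}]$; if $|\mathbf j|$ is even, $\tilde X^{(\mathbf j)}=|\mathbf j|\int\frac{1}{pu_0^2}\sum_{i=1}^d\tilde X^{(\mathbf j-\delta_i)}$. Generalized formal powers $X$: indexed by $\mathbf j=\mathbf m+\frac1d\mathbf 1$, $\mathbf m\in\mathbb Z^d$, $|\mathbf j|=|\mathbf m|+1$; admissible means at most one $m_i$ odd; $X^{(\frac1d\mathbf 1-\delta_i)}\equiv\frac1d$; $X^{(\mathbf m+\frac1d\mathbf 1)}\equiv0$ if some $m_i<0$ and $\mathbf m\notin\{-\delta_1,\dots,-\delta_d\}$; for admissible $\mathbf j$ with $\mathbf m\ge0$: if $|\mathbf j|$ is even (exactly one $m_i$ odd), $X^{(\mathbf j)}=|\mathbf j|\int u_0R_i[u_0X^{(\mathbf j-\delta_i)}]$ for that $i$; if $|\mathbf j|$ is odd, $X^{(\mathbf j)}=|\mathbf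 j|\int\frac{1}{pu_0^2}\sum_{i=1}^dX^{(\mathbf j-\delta_i)}$. *)

theory Defs
  imports "HOL-Analysis.Analysis"
begin

definition dI :: "real \<Rightarrow> real \<Rightarrow> (real \<Rightarrow> complex) \<Rightarrow> real \<Rightarrow> complex" where
  "dI x1 x2 f x = vector_derivative f (at x within {x1..x2})"

definition integ :: "real \<Rightarrow> (real \<Rightarrow> complex) \<Rightarrow> real \<Rightarrow> complex" where
  "integ x0 g x = (if x0 \<le> x then integral {x0..x} g else - integral {x..x0} g)"

definition Lop :: "real \<Rightarrow> real \<Rightarrow> (real \<Rightarrow> complex) \<Rightarrow> (real \<Rightarrow> complex)
    \<Rightarrow> (real \<Rightarrow> complex) \<Rightarrow> real \<Rightarrow> complex" where
  "Lop x1 x2 p q y x = dI x1 x2 (\<lambda>t. p t * dI x1 x2 y t) x + q x * y x"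

definition Rop :: "real \<Rightarrow> real \<Rightarrow> ('d \<Rightarrow> real \<Rightarrow> complex) \<Rightarrow> ('d \<Rightarrow> real \<Rightarrow> complex)
    \<Rightarrow> 'd \<Rightarrow> (real \<Rightarrow> complex) \<Rightarrow> real \<Rightarrow> complex" where
  "Rop x1 x2 r s i y x = r i x * y x + s i x * dI x1 x2 y x"

definition delta :: "'d \<Rightarrow> 'd \<Rightarrow> int" where
  "delta i = (\<lambda>k. if k = i then 1 else 0)"

definition admissible :: "('d::finite \<Rightarrow> int) \<Rightarrow> bool" where
  "admissible j \<longleftrightarrow> card {i. odd (j i)} \<le> 1"

text \<open>Level-indexed construction of the powers X-tilde; the level k equals |j|.
  Non-admissible indices (never used) are assigned the value 0.\<close>
fun XtL :: "real \<Rightarrow> real \<Rightarrow> real \<Rightarrow> (real \<Rightarrow> complex) \<Rightarrow> (real \<Rightarrow> complex)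
    \<Rightarrow> ('d::finite \<Rightarrow> real \<Rightarrow> complex) \<Rightarrow> ('d \<Rightarrow> real \<Rightarrow> complex)
    \<Rightarrow> nat \<Rightarrow> ('d \<Rightarrow> int) \<Rightarrow> real \<Rightarrow> complex" where
  "XtL x1 x2 x0 p u0 r s 0 j = (if j = (\<lambda>_. 0) then (\<lambda>_. 1) else (\<lambda>_. 0))"
| "XtL x1 x2 x0 p u0 r s (Suc k) j =
     (if (\<exists>i. j i < 0) \<or> \<not> admissible j then (\<lambda>_. 0)
      else if odd (Suc k) then
        (let i = (THE i. odd (j i)) in
          (\<lambda>x. of_nat (Suc k) * integ x0 (\<lambda>t. u0 t *
             Rop x1 x2 r s i (\<lambda>y. u0 y * XtL x1 x2 x0 p u0 r s k (\<lambda>k. j k - delta i k) y) t) x))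
      else
        (\<lambda>x. of_nat (Suc k) * integ x0 (\<lambda>t. 1 / (p t * (u0 t)\<^sup>2) *
             (\<Sum>i\<in>UNIV. XtL x1 x2 x0 p u0 r s k (\<lambda>k. j k - delta i k) t)) x))"

definition Xtilde :: "real \<Rightarrow> real \<Rightarrow> real \<Rightarrow> (real \<Rightarrow> complex) \<Rightarrow> (real \<Rightarrow> complex)
    \<Rightarrow> ('d::finite \<Rightarrow> real \<Rightarrow> complex) \<Rightarrow> ('d \<Rightarrow> real \<Rightarrow> complex)
    \<Rightarrow> ('d \<Rightarrow> int) \<Rightarrow> real \<Rightarrow> complex" where
  "Xtilde x1 x2 x0 p u0 r s j = XtL x1 x2 x0 p u0 r s (nat (sum j UNIV)) j"

text \<open>Level-indexed construction of the powers X^(m + 1/d 1); the level k equals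
  |j| = |m| + 1.  Non-admissible indices (never used) are assigned the value 0.\<close>
fun XL :: "real \<Rightarrow> real \<Rightarrow> real \<Rightarrow> (real \<Rightarrow> complex) \<Rightarrow> (real \<Rightarrow> complex)
    \<Rightarrow> ('d::finite \<Rightarrow> real \<Rightarrow> complex) \<Rightarrow> ('d \<Rightarrow> real \<Rightarrow> complex)
    \<Rightarrow> nat \<Rightarrow> ('d \<Rightarrow> int) \<Rightarrow> real \<Rightarrow> complex" where
  "XL x1 x2 x0 p u0 r s 0 m =
     (if \<exists>i. m = (\<lambda>k. - delta i k) then (\<lambda>_. 1 / of_nat CARD('d)) else (\<lambda>_. 0))"
| "XL x1 x2 x0 p u0 r s (Suc k) m =
     (if \<exists>i. m = (\<lambda>k. - delta i k) then (\<lambda>_. 1 / of_nat CARD('d))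
      else if (\<exists>i. m i < 0) \<or> \<not> admissible m then (\<lambda>_. 0)
      else if even (Suc k) then
        (let i = (THE i. odd (m i)) in
          (\<lambda>x. of_nat (Suc k) * integ x0 (\<lambda>t. u0 t *
             Rop x1 x2 r s i (\<lambda>y. u0 y * XL x1 x2 x0 p u0 r s k (\<lambda>k. m k - delta i k) y) t) x))
      else
        (\<lambda>x. of_nat (Suc k) * integ x0 (\<lambda>t. 1 / (p t * (u0 t)\<^sup>2) *
             (\<Sum>i\<in>UNIV. XL x1 x2 x0 p u0 r s k (\<lambda>k. m k - delta i k) t)) x))"

text \<open>X^(m + 1/d 1) for m in Z^d (the argument is m).\<close>
definition Xpow :: "real \<Rightarrow> real \<Rightarrow> real \<Rightarrow> (real \<Rightarrow> complex) \<Rightarrow> (real \<Rightarrow> complex)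
    \<Rightarrow> ('d::finite \<Rightarrow> real \<Rightarrow> complex) \<Rightarrow> ('d \<Rightarrow> real \<Rightarrow> complex)
    \<Rightarrow> ('d \<Rightarrow> int) \<Rightarrow> real \<Rightarrow> complex" where
  "Xpow x1 x2 x0 p u0 r s m = XL x1 x2 x0 p u0 r s (nat (sum m UNIV + 1)) m"

end

theory Submission
  imports Defs
begin

text \<open>Since L u0 = 0, the operator factorises on multiples of u0 as
  L[u0 f] = (p u0^2 f')' / u0.  For a power of even index 2n, the even-level recursion makes
  p u0^2 f' equal to its degree times the sum of the odd-index neighbours of index
  2n - delta_i, and the odd-level recursion makes the derivative of each neighbour equal to
  one less than the degree times u0 R_i[u0 X^(2n - 2 delta_i)].  Neighbours with a negative
  entry vanish together with the matching right-hand term, and the base powers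
  X^(1/d 1 - delta_i) are constant and carry the factor 0.\<close>

definition C1_on :: "real \<Rightarrow> real \<Rightarrow> (real \<Rightarrow> 'a::real_normed_vector) \<Rightarrow> (real \<Rightarrow> 'a) \<Rightarrow> bool" where
  "C1_on a b f f' \<longleftrightarrow> continuous_on {a..b} f' \<and>
     (\<forall>x\<in>{a..b}. (f has_vector_derivative f' x) (at x within {a..b}))"

lemma C1_on_imp_continuous_on: "C1_on a b f f' \<Longrightarrow> continuous_on {a..b} f"
  unfolding C1_on_def by (auto intro: continuous_on_vector_derivative)

lemma C1_on_const: "C1_on a b (\<lambda>_. c) (\<lambda>_. 0)"
  unfolding C1_on_def by auto

lemma dI_eqI:
  assumes "a < b" "x \<in> {a..b}" "(f has_vector_derivative f') (at x within {a..b})"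
  shows "dI a b f x = f'"
  unfolding dI_def using vector_derivative_within_closed_interval[OF assms] .

lemma dI_const: "a < b \<Longrightarrow> x \<in> {a..b} \<Longrightarrow> dI a b (\<lambda>_. c) x = 0"
  by (rule dI_eqI) auto

lemma has_vector_derivative_dI:
  "f differentiable (at x within {a..b}) \<Longrightarrow> (f has_vector_derivative dI a b f x) (at x within {a..b})"
  unfolding dI_def by (simp add: vector_derivative_works[symmetric])

lemma integ_eq_integral_diff:
  assumes "continuous_on {a..b} g" "x0 \<in> {a..b}" "y \<in> {a..b}"
  shows "integ x0 g y = integral {a..y} g - integral {a..x0} g"
proof -
  have combine: "integral {a..u} g + integral {u..v} g = integral {a..v} g"
    if "u \<in> {a..b}" "v \<in> {a..b}" "u \<le> v" for u v
  proof (rule Henstock_Kurzweil_Integration.integral_combine)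
    show "g integrable_on {a..v}"
      using that by (intro integrable_continuous_interval continuous_on_subset[OF assms(1)]) auto
  qed (use that in auto)
  show ?thesis
    using combine[of x0 y] combine[of y x0] assms(2,3) unfolding integ_def
    by (auto simp: algebra_simps)
qed

lemma has_vector_derivative_integ:
  assumes "continuous_on {a..b} g" "x0 \<in> {a..b}" "x \<in> {a..b}"
  shows "(integ x0 g has_vector_derivative g x) (at x within {a..b})"
proof -
  have "((\<lambda>y. integral {a..y} g - integral {a..x0} g) has_vector_derivative g x) (at x within {a..b})"
    using integral_has_vector_derivative[OF assms(1,3)] by (simp add: has_vector_derivative_diff_const)
  then show ?thesis
    by (rule has_vector_derivative_transform[OF assms(3), rotated])
      (simp add: integ_eq_integral_diff[OF assms(1,2)])
qed

lemma C1_on_integ: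
  assumes "continuous_on {a..b} g" "x0 \<in> {a..b}"
  shows "C1_on a b (\<lambda>x. c * integ x0 g x) (\<lambda>x. c * g x)"
  unfolding C1_on_def using assms
  by (auto intro!: continuous_intros has_vector_derivative_mult_right has_vector_derivative_integ)

lemma has_vector_derivative_inverse:
  fixes f :: "real \<Rightarrow> 'a::real_normed_field"
  assumes "(f has_vector_derivative f') (at x within S)" "f x \<noteq> 0"
  shows "((\<lambda>t. inverse (f t)) has_vector_derivative - f' / (f x)\<^sup>2) (at x within S)"
proof -
  have "((\<lambda>t. inverse (f t)) has_derivative (\<lambda>h. - (inverse (f x) * (h *\<^sub>R f') * inverse (f x)))) (at x within S)"
    using Deriv.has_derivative_inverse[OF assms(2) assms(1)[unfolded has_vector_derivative_def]] .
  moreover have "(\<lambda>h. - (inverse (f x) * (h *\<^sub>R f') * inverse (f x))) = (\<lambda>h. h *\<^sub>R (- f' / (f x)\<^sup>2))"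
    using assms(2) by (auto simp: fun_eq_iff field_simps power2_eq_square)
  ultimately show ?thesis unfolding has_vector_derivative_def by simp
qed

lemma sum_delta: "(\<Sum>k\<in>UNIV. delta i k) = 1" for i :: "'d::finite"
  by (simp add: delta_def)

lemma sum_double_index: "(\<Sum>k\<in>UNIV. 2 * int (n k)) = 2 * int (sum n UNIV)"
  by (simp add: sum_distrib_left)

lemma sum_double_index_minus_double_delta:
  "(\<Sum>k\<in>UNIV. 2 * int (n k) - 2 * delta i k) = 2 * int (sum n UNIV) - 2"
  for n :: "'d::finite \<Rightarrow> nat"
  by (simp add: sum_subtractf sum_double_index sum_delta sum_distrib_left[symmetric])

lemma admissible_double_index: "admissible (\<lambda>k. 2 * int (n k))"
  unfolding admissible_def by simp

lemma odd_entries_double_index_minus_delta: "{k. odd (2 * int (n k) - delta i k)} = {i}"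
  by (auto simp: delta_def)

lemma admissible_double_index_minus_delta: "admissible (\<lambda>k. 2 * int (n k) - delta i k)"
  unfolding admissible_def odd_entries_double_index_minus_delta by simp

lemma the_odd_delta: "(THE k. odd (delta i k)) = i"
  by (rule the_equality) (auto simp: delta_def split: if_splits)

lemma even_index_ne_neg_delta: "(\<lambda>k. 2 * j k) \<noteq> (\<lambda>k. - delta i k)"
proof
  assume "(\<lambda>k. 2 * j k) = (\<lambda>k. - delta i k)"
  then have "2 * j i = - 1" by (metis delta_def)
  then show False by presburger
qed

lemma double_index_minus_double_delta_ne_neg_delta:
  "(\<lambda>k. 2 * int (n k) - 2 * delta i k) \<noteq> (\<lambda>k. - delta i' k)"
  using even_index_ne_neg_delta[of "\<lambda>k. int (n k) - delta i k" i'] by (simp add: algebra_simps)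

lemma double_index_minus_delta_eq_neg_delta:
  assumes "(\<lambda>k. 2 * int (n k) - delta i k) = (\<lambda>k. - delta i' k)"
  shows "n = (\<lambda>_. 0)"
proof
  fix k
  from assms have "2 * int (n k) - delta i k = - delta i' k" by metis
  then show "n k = 0" by (auto simp: delta_def split: if_splits)
qed

locale formal_powers =
  fixes x1 x2 x0 :: real
    and p u0 :: "real \<Rightarrow> complex"
    and r s :: "'d::finite \<Rightarrow> real \<Rightarrow> complex"
begin

abbreviation "R \<equiv> Rop x1 x2 r s"
abbreviation "Xt \<equiv> XtL x1 x2 x0 p u0 r s"
abbreviation "Xtil \<equiv> Xtilde x1 x2 x0 p u0 r s"
abbreviation "Xl \<equiv> XL x1 x2 x0 p u0 r s"
abbreviation "X \<equiv> Xpow x1 x2 x0 p u0 r s"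

lemma XtL_negative_index: "j i < 0 \<Longrightarrow> Xt k j = (\<lambda>_. 0)"
  by (cases k) auto

lemma Xtilde_negative_index: "j i < 0 \<Longrightarrow> Xtil j = (\<lambda>_. 0)"
  unfolding Xtilde_def by (rule XtL_negative_index)

lemma XL_negative_index: "j i < 0 \<Longrightarrow> (\<And>i'. j \<noteq> (\<lambda>k. - delta i' k)) \<Longrightarrow> Xl k j = (\<lambda>_. 0)"
  by (cases k) auto

lemma XL_neg_delta: "Xl k (\<lambda>k. - delta i k) = (\<lambda>_. 1 / of_nat CARD('d))"
  by (cases k) auto

lemma Xtilde_double_index:
  assumes "sum n UNIV > 0"
  shows "Xtil (\<lambda>k. 2 * int (n k)) = (\<lambda>x. of_nat (2 * sum n UNIV) * integ x0 (\<lambda>t.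
     1 / (p t * (u0 t)\<^sup>2) * (\<Sum>i\<in>UNIV. Xt (2 * sum n UNIV - 1) (\<lambda>k. 2 * int (n k) - delta i k) t)) x)"
proof -
  obtain l where l: "2 * sum n UNIV = Suc l" using assms by (cases "2 * sum n UNIV") auto
  then have "nat (\<Sum>k\<in>UNIV. 2 * int (n k)) = Suc l" unfolding sum_double_index by (simp flip: of_nat_sum)
  moreover have "\<not> odd (Suc l)" using l by presburger
  ultimately show ?thesis
    unfolding Xtilde_def using l admissible_double_index[of n] by simp
qed

lemma XtL_double_index_minus_delta:
  assumes "n i > 0"
  shows "Xt (2 * sum n UNIV - 1) (\<lambda>k. 2 * int (n k) - delta i k) = (\<lambda>x. of_nat (2 * sum n UNIV - 1) *
     integ x0 (\<lambda>t. u0 t * R i (\<lambda>y. u0 y * Xtil (\<lambda>k. 2 * int (n k) - 2 * delta i k) y) t) x)"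
proof -
  have "n i \<le> sum n UNIV" by (rule member_le_sum) auto
  with assms obtain l where l: "2 * sum n UNIV - 1 = Suc l" "2 * sum n UNIV - 2 = l"
    by (intro that[of "2 * sum n UNIV - 2"]) auto
  have "nat (\<Sum>k\<in>UNIV. 2 * int (n k) - 2 * delta i k) = l"
    unfolding sum_double_index_minus_double_delta using l by (auto simp flip: of_nat_sum)
  moreover have "(\<lambda>k'. 2 * int (n k') - delta i k' - delta i k') = (\<lambda>k. 2 * int (n k) - 2 * delta i k)"
    by auto
  moreover have "\<not> (2 * int (n k) - delta i k < 0)" for k
    using assms by (auto simp: delta_def)
  moreover have "odd (Suc l)" using l assms \<open>n i \<le> sum n UNIV\<close> by presburger
  ultimately show ?thesis
    unfolding l(1) Xtilde_def using l admissible_double_index_minus_delta[of n i]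
    by (simp add: the_odd_delta)
qed

lemma Xpow_double_index:
  "X (\<lambda>k. 2 * int (n k)) = (\<lambda>x. of_nat (2 * sum n UNIV + 1) * integ x0 (\<lambda>t.
     1 / (p t * (u0 t)\<^sup>2) * (\<Sum>i\<in>UNIV. Xl (2 * sum n UNIV) (\<lambda>k. 2 * int (n k) - delta i k) t)) x)"
proof -
  have "nat ((\<Sum>k\<in>UNIV. 2 * int (n k)) + 1) = Suc (2 * sum n UNIV)"
    unfolding sum_double_index by (simp flip: of_nat_sum)
  moreover have "(\<lambda>k. 2 * int (n k)) \<noteq> (\<lambda>k. - delta i k)" for i
    by (rule even_index_ne_neg_delta)
  ultimately show ?thesis
    unfolding Xpow_def using admissible_double_index[of n] by simp
qed

lemma XL_double_index_minus_delta:
  assumes "n i > 0"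
  shows "Xl (2 * sum n UNIV) (\<lambda>k. 2 * int (n k) - delta i k) = (\<lambda>x. of_nat (2 * sum n UNIV) *
     integ x0 (\<lambda>t. u0 t * R i (\<lambda>y. u0 y * X (\<lambda>k. 2 * int (n k) - 2 * delta i k) y) t) x)"
proof -
  have "n i \<le> sum n UNIV" by (rule member_le_sum) auto
  with assms obtain l where l: "2 * sum n UNIV = Suc l" "2 * sum n UNIV - 1 = l"
    by (intro that[of "2 * sum n UNIV - 1"]) auto
  have "nat ((\<Sum>k\<in>UNIV. 2 * int (n k) - 2 * delta i k) + 1) = l"
    unfolding sum_double_index_minus_double_delta using l by (auto simp flip: of_nat_sum)
  moreover have "(\<lambda>k'. 2 * int (n k') - delta i k' - delta i k') = (\<lambda>k. 2 * int (n k) - 2 * delta i k)"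
    by auto
  moreover have "\<not> (2 * int (n k) - delta i k < 0)" for k
    using assms by (auto simp: delta_def)
  moreover have "(\<lambda>k. 2 * int (n k) - delta i k) \<noteq> (\<lambda>k. - delta i' k)" for i'
    using assms double_index_minus_delta_eq_neg_delta by fastforce
  moreover have "even (Suc l)" using l by presburger
  ultimately show ?thesis
    unfolding l(1) Xpow_def using l admissible_double_index_minus_delta[of n i]
    by (simp add: the_odd_delta double_index_minus_double_delta_ne_neg_delta)
qed

end

locale sturm_liouville = formal_powers x1 x2 x0 p u0 r s
  for x1 x2 x0 :: real
    and p u0 :: "real \<Rightarrow> complex"
    and r s :: "'d::finite \<Rightarrow> real \<Rightarrow> complex" +
  fixes q :: "real \<Rightarrow> complex"
  assumes x1_less_x2: "x1 < x2" and x0_in: "x0 \<in> {x1..x2}"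
    and continuous_p: "continuous_on {x1..x2} p" and p_nonzero: "\<forall>x\<in>{x1..x2}. p x \<noteq> 0"
    and continuous_r: "\<forall>i. continuous_on {x1..x2} (r i)"
    and continuous_s: "\<forall>i. continuous_on {x1..x2} (s i)"
    and u0_nonzero: "\<forall>x\<in>{x1..x2}. u0 x \<noteq> 0"
    and u0_differentiable: "\<forall>x\<in>{x1..x2}. u0 differentiable (at x within {x1..x2})"
    and p_u0'_differentiable:
      "\<forall>x\<in>{x1..x2}. (\<lambda>t. p t * dI x1 x2 u0 t) differentiable (at x within {x1..x2})"
    and L_u0: "\<forall>x\<in>{x1..x2}. Lop x1 x2 p q u0 x = 0"
begin

abbreviation "u0' \<equiv> dI x1 x2 u0"

lemma u0_has_derivative: "x \<in> {x1..x2} \<Longrightarrow> (u0 has_vector_derivative u0' x) (at x within {x1..x2})"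
  using u0_differentiable by (simp add: has_vector_derivative_dI)

lemma p_u0'_has_derivative: "x \<in> {x1..x2} \<Longrightarrow>
    ((\<lambda>t. p t * u0' t) has_vector_derivative dI x1 x2 (\<lambda>t. p t * u0' t) x) (at x within {x1..x2})"
  using p_u0'_differentiable by (simp add: has_vector_derivative_dI)

lemma continuous_on_u0: "continuous_on {x1..x2} u0"
  using u0_has_derivative by (rule continuous_on_vector_derivative)

lemma continuous_on_u0': "continuous_on {x1..x2} u0'"
proof -
  have "continuous_on {x1..x2} (\<lambda>t. p t * u0' t)"
    using p_u0'_has_derivative by (rule continuous_on_vector_derivative)
  then have "continuous_on {x1..x2} (\<lambda>t. p t * u0' t / p t)"
    using continuous_p p_nonzero by (intro continuous_on_divide) auto
  then show ?thesis by (rule continuous_on_eq) (use p_nonzero in auto)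
qed

lemma dI_u0_mult:
  assumes "C1_on x1 x2 f f'" "x \<in> {x1..x2}"
  shows "dI x1 x2 (\<lambda>t. u0 t * f t) x = u0 x * f' x + u0' x * f x"
  using assms by (auto simp: C1_on_def intro!: dI_eqI x1_less_x2 has_vector_derivative_mult u0_has_derivative)

lemma continuous_on_u0_R_u0_mult:
  assumes "C1_on x1 x2 f f'"
  shows "continuous_on {x1..x2} (\<lambda>t. u0 t * R i (\<lambda>y. u0 y * f y) t)"
proof -
  have "continuous_on {x1..x2} (\<lambda>t. u0 t * (r i t * (u0 t * f t) + s i t * (u0 t * f' t + u0' t * f t)))"
    using assms C1_on_imp_continuous_on[OF assms] continuous_on_u0 continuous_on_u0' continuous_r continuous_s
    by (auto simp: C1_on_def intro!: continuous_intros)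
  then show ?thesis by (rule continuous_on_eq) (auto simp: Rop_def dI_u0_mult[OF assms])
qed

lemma C1_on_integ_u0_R_u0_mult:
  assumes "C1_on x1 x2 f f'"
  shows "C1_on x1 x2 (\<lambda>x. c * integ x0 (\<lambda>t. u0 t * R i (\<lambda>y. u0 y * f y) t) x)
                     (\<lambda>x. c * (u0 x * R i (\<lambda>y. u0 y * f y) x))"
  by (rule C1_on_integ[OF continuous_on_u0_R_u0_mult[OF assms] x0_in])

lemma C1_on_integ_weighted_sum:
  assumes "\<And>i. continuous_on {x1..x2} (f i)"
  shows "C1_on x1 x2 (\<lambda>x. c * integ x0 (\<lambda>t. 1 / (p t * (u0 t)\<^sup>2) * (\<Sum>i\<in>UNIV. f i t)) x)
                     (\<lambda>x. c * (1 / (p x * (u0 x)\<^sup>2) * (\<Sum>i\<in>UNIV. f i x)))"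
  using assms continuous_p continuous_on_u0 p_nonzero u0_nonzero
  by (intro C1_on_integ x0_in) (auto intro!: continuous_intros)

lemma XtL_C1_on: "\<exists>f'. C1_on x1 x2 (Xt k j) f'"
proof (induction k arbitrary: j)
  case 0
  show ?case by (auto intro: C1_on_const)
next
  case (Suc k)
  then have "\<forall>i. \<exists>f'. C1_on x1 x2 (Xt k (\<lambda>k. j k - delta i k)) f'" by blast
  then obtain f' where f': "\<And>i. C1_on x1 x2 (Xt k (\<lambda>k. j k - delta i k)) (f' i)" by metis
  have "\<exists>g. C1_on x1 x2 (\<lambda>x. c * integ x0 (\<lambda>t. u0 t * R i (\<lambda>y. u0 y * Xt k (\<lambda>k. j k - delta i k) y) t) x) g"
    for c i using C1_on_integ_u0_R_u0_mult[OF f'] by blast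
  moreover have "\<exists>g. C1_on x1 x2 (\<lambda>x. c * integ x0 (\<lambda>t.
      1 / (p t * (u0 t)\<^sup>2) * (\<Sum>i\<in>UNIV. Xt k (\<lambda>k. j k - delta i k) t)) x) g" for c
    using C1_on_integ_weighted_sum[of "\<lambda>i. Xt k (\<lambda>k. j k - delta i k)", OF C1_on_imp_continuous_on[OF f']]
    by blast
  ultimately show ?case
    unfolding XtL.simps(2) Let_def by (simp only: split: if_split) (blast intro: C1_on_const)
qed

lemma XL_C1_on: "\<exists>f'. C1_on x1 x2 (Xl k j) f'"
proof (induction k arbitrary: j)
  case 0
  show ?case by (auto intro: C1_on_const)
next
  case (Suc k)
  then have "\<forall>i. \<exists>f'. C1_on x1 x2 (Xl k (\<lambda>k. j k - delta i k)) f'" by blast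
  then obtain f' where f': "\<And>i. C1_on x1 x2 (Xl k (\<lambda>k. j k - delta i k)) (f' i)" by metis
  have "\<exists>g. C1_on x1 x2 (\<lambda>x. c * integ x0 (\<lambda>t. u0 t * R i (\<lambda>y. u0 y * Xl k (\<lambda>k. j k - delta i k) y) t) x) g"
    for c i using C1_on_integ_u0_R_u0_mult[OF f'] by blast
  moreover have "\<exists>g. C1_on x1 x2 (\<lambda>x. c * integ x0 (\<lambda>t.
      1 / (p t * (u0 t)\<^sup>2) * (\<Sum>i\<in>UNIV. Xl k (\<lambda>k. j k - delta i k) t)) x) g" for c
    using C1_on_integ_weighted_sum[of "\<lambda>i. Xl k (\<lambda>k. j k - delta i k)", OF C1_on_imp_continuous_on[OF f']]
    by blast
  ultimately show ?case
    unfolding XL.simps(2) Let_def by (simp only: split: if_split) (blast intro: C1_on_const)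
qed

lemma R_zero: "t \<in> {x1..x2} \<Longrightarrow> R i (\<lambda>_. 0) t = 0"
  by (simp add: Rop_def dI_const x1_less_x2)

lemma Lop_u0_mult:
  assumes f: "C1_on x1 x2 f f'"
    and f'_eq: "\<And>t. t \<in> {x1..x2} \<Longrightarrow> f' t = F t / (p t * (u0 t)\<^sup>2)"
    and F: "\<And>t. t \<in> {x1..x2} \<Longrightarrow> (F has_vector_derivative F' t) (at t within {x1..x2})"
    and x: "x \<in> {x1..x2}"
  shows "Lop x1 x2 p q (\<lambda>t. u0 t * f t) x = F' x / u0 x"
proof -
  define P where "P = (\<lambda>t. p t * u0' t)"
  have flux: "p t * dI x1 x2 (\<lambda>t. u0 t * f t) t = P t * f t + F t * inverse (u0 t)"
    if "t \<in> {x1..x2}" for t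
    using dI_u0_mult[OF f that] f'_eq[OF that] p_nonzero u0_nonzero that
    by (auto simp: P_def field_simps power2_eq_square)
  have "((\<lambda>t. P t * f t + F t * inverse (u0 t)) has_vector_derivative
      (P x * f' x + dI x1 x2 P x * f x) + (F x * (- u0' x / (u0 x)\<^sup>2) + F' x * inverse (u0 x)))
      (at x within {x1..x2})"
  proof (intro has_vector_derivative_add has_vector_derivative_mult F[OF x])
    show "(P has_vector_derivative dI x1 x2 P x) (at x within {x1..x2})"
      unfolding P_def by (rule p_u0'_has_derivative[OF x])
    show "(f has_vector_derivative f' x) (at x within {x1..x2})"
      using f x by (auto simp: C1_on_def)
    show "((\<lambda>t. inverse (u0 t)) has_vector_derivative - u0' x / (u0 x)\<^sup>2) (at x within {x1..x2})"
      using has_vector_derivative_inverse[OF u0_has_derivative[OF x]] u0_nonzero x by auto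
  qed
  then have "((\<lambda>t. p t * dI x1 x2 (\<lambda>t. u0 t * f t) t) has_vector_derivative
      (P x * f' x + dI x1 x2 P x * f x) + (F x * (- u0' x / (u0 x)\<^sup>2) + F' x * inverse (u0 x)))
      (at x within {x1..x2})"
    by (rule has_vector_derivative_transform[OF x, rotated]) (use flux in auto)
  moreover have "dI x1 x2 P x = - (q x * u0 x)"
    using L_u0 x by (simp add: Lop_def P_def eq_neg_iff_add_eq_0)
  ultimately show ?thesis
    using f'_eq[OF x] p_nonzero u0_nonzero x unfolding Lop_def
    by (simp add: dI_eqI[OF x1_less_x2 x] P_def field_simps power2_eq_square)
qed

lemma Lop_u0_mult_integ_weighted_sum:
  assumes Y: "\<And>i t. t \<in> {x1..x2} \<Longrightarrow>
      (Y i has_vector_derivative c' * (u0 t * R i (\<lambda>y. u0 y * Z i y) t)) (at t within {x1..x2})"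
    and x: "x \<in> {x1..x2}"
  shows "Lop x1 x2 p q (\<lambda>t. u0 t * (c * integ x0 (\<lambda>t. 1 / (p t * (u0 t)\<^sup>2) * (\<Sum>i\<in>UNIV. Y i t)) t)) x
       = c * c' * (\<Sum>i\<in>UNIV. R i (\<lambda>t. u0 t * Z i t) x)"
proof -
  have "continuous_on {x1..x2} (Y i)" for i
    using Y by (rule continuous_on_vector_derivative)
  then have "Lop x1 x2 p q (\<lambda>t. u0 t * (c * integ x0 (\<lambda>t. 1 / (p t * (u0 t)\<^sup>2) * (\<Sum>i\<in>UNIV. Y i t)) t)) x
      = c * (\<Sum>i\<in>UNIV. c' * (u0 x * R i (\<lambda>y. u0 y * Z i y) x)) / u0 x"
    by (intro Lop_u0_mult[OF C1_on_integ_weighted_sum _ _ x, where F = "\<lambda>t. c * (\<Sum>i\<in>UNIV. Y i t)"])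
      (auto intro!: has_vector_derivative_mult_right has_vector_derivative_sum Y)
  also have "\<dots> = c * c' * (\<Sum>i\<in>UNIV. R i (\<lambda>t. u0 t * Z i t) x)"
    using u0_nonzero x by (simp add: sum_distrib_left sum_divide_distrib mult.assoc)
  finally show ?thesis .
qed

lemma Lop_u0_Xtilde_double_index:
  assumes x: "x \<in> {x1..x2}"
  shows "Lop x1 x2 p q (\<lambda>t. u0 t * Xtil (\<lambda>i. 2 * int (n i)) t) x
      = 2 * of_nat (sum n UNIV) * (2 * of_nat (sum n UNIV) - 1) *
        (\<Sum>i\<in>UNIV. R i (\<lambda>t. u0 t * Xtil (\<lambda>k. 2 * int (n k) - 2 * delta i k) t) x)"
proof (cases "sum n UNIV = 0")
  case True
  then have "Xtil (\<lambda>i. 2 * int (n i)) = (\<lambda>_. 1)" by (simp add: Xtilde_def)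
  then show ?thesis using L_u0 x True by simp
next
  case False
  let ?k = "2 * sum n UNIV - 1"
  have "(Xt ?k (\<lambda>k. 2 * int (n k) - delta i k) has_vector_derivative
      of_nat ?k * (u0 t * R i (\<lambda>y. u0 y * Xtil (\<lambda>k. 2 * int (n k) - 2 * delta i k) y) t))
      (at t within {x1..x2})" if t: "t \<in> {x1..x2}" for i t
  proof (cases "n i = 0")
    case True
    then show ?thesis
      using XtL_negative_index[of _ i] Xtilde_negative_index[of _ i] by (simp add: delta_def R_zero[OF t])
  next
    case False
    obtain g where "C1_on x1 x2 (Xtil (\<lambda>k. 2 * int (n k) - 2 * delta i k)) g"
      using XtL_C1_on unfolding Xtilde_def by blast
    from C1_on_integ_u0_R_u0_mult[OF this] show ?thesis
      unfolding XtL_double_index_minus_delta[of n i, OF False[unfolded neq0_conv]] C1_on_def using t by blast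
  qed
  then have "Lop x1 x2 p q (\<lambda>t. u0 t * Xtil (\<lambda>i. 2 * int (n i)) t) x
      = of_nat (2 * sum n UNIV) * of_nat ?k *
        (\<Sum>i\<in>UNIV. R i (\<lambda>t. u0 t * Xtil (\<lambda>k. 2 * int (n k) - 2 * delta i k) t) x)"
    unfolding Xtilde_double_index[OF False[unfolded neq0_conv]]
    by (rule Lop_u0_mult_integ_weighted_sum[OF _ x])
  then show ?thesis using False by (simp add: of_nat_diff)
qed

lemma Lop_u0_Xpow_double_index:
  assumes x: "x \<in> {x1..x2}"
  shows "Lop x1 x2 p q (\<lambda>t. u0 t * X (\<lambda>i. 2 * int (n i)) t) x
      = (2 * of_nat (sum n UNIV) + 1) * (2 * of_nat (sum n UNIV)) *
        (\<Sum>i\<in>UNIV. R i (\<lambda>t. u0 t * X (\<lambda>k. 2 * int (n k) - 2 * delta i k) t) x)"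
proof -
  let ?k = "2 * sum n UNIV"
  have "(Xl ?k (\<lambda>k. 2 * int (n k) - delta i k) has_vector_derivative
      of_nat ?k * (u0 t * R i (\<lambda>y. u0 y * X (\<lambda>k. 2 * int (n k) - 2 * delta i k) y) t))
      (at t within {x1..x2})" if t: "t \<in> {x1..x2}" for i t
  proof (cases "n i = 0")
    case True
    show ?thesis
    proof (cases "n = (\<lambda>_. 0)")
      case True
      then show ?thesis using XL_neg_delta by simp
    next
      case False
      have "Xl ?k (\<lambda>k. 2 * int (n k) - delta i k) = (\<lambda>_. 0)"
      proof (rule XL_negative_index[of _ i])
        show "2 * int (n i) - delta i i < 0" using \<open>n i = 0\<close> by (simp add: delta_def)
        show "(\<lambda>k. 2 * int (n k) - delta i k) \<noteq> (\<lambda>k. - delta i' k)" for i'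
          using False double_index_minus_delta_eq_neg_delta[of n i i'] by blast
      qed
      moreover have "X (\<lambda>k. 2 * int (n k) - 2 * delta i k) = (\<lambda>_. 0)"
        unfolding Xpow_def
      proof (rule XL_negative_index[of _ i])
        show "2 * int (n i) - 2 * delta i i < 0" using \<open>n i = 0\<close> by (simp add: delta_def)
        show "(\<lambda>k. 2 * int (n k) - 2 * delta i k) \<noteq> (\<lambda>k. - delta i' k)" for i'
          by (rule double_index_minus_double_delta_ne_neg_delta)
      qed
      ultimately show ?thesis by (simp add: R_zero[OF t])
    qed
  next
    case False
    obtain g where "C1_on x1 x2 (X (\<lambda>k. 2 * int (n k) - 2 * delta i k)) g"
      using XL_C1_on unfolding Xpow_def by blast
    from C1_on_integ_u0_R_u0_mult[OF this] show ?thesis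
      unfolding XL_double_index_minus_delta[of n i, OF False[unfolded neq0_conv]] C1_on_def using t by blast
  qed
  then have "Lop x1 x2 p q (\<lambda>t. u0 t * X (\<lambda>i. 2 * int (n i)) t) x
      = of_nat (?k + 1) * of_nat ?k *
        (\<Sum>i\<in>UNIV. R i (\<lambda>t. u0 t * X (\<lambda>k. 2 * int (n k) - 2 * delta i k) t) x)"
    unfolding Xpow_double_index by (rule Lop_u0_mult_integ_weighted_sum[OF _ x])
  then show ?thesis by simp
qed

end

theorem mainTheorem6:
  fixes x1 x2 x0 :: real
    and p q u0 :: "real \<Rightarrow> complex"
    and r s :: "'d::finite \<Rightarrow> real \<Rightarrow> complex"
    and n :: "'d \<Rightarrow> nat"
  assumes "x1 < x2" and "x0 \<in> {x1..x2}"
    and "continuous_on {x1..x2} p" and "\<forall>x\<in>{x1..x2}. p x \<noteq> 0"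
    and "continuous_on {x1..x2} q"
    and "\<forall>i. continuous_on {x1..x2} (r i)" and "\<forall>i. continuous_on {x1..x2} (s i)"
    and "\<forall>x\<in>{x1..x2}. u0 x \<noteq> 0"
    and "\<forall>x\<in>{x1..x2}. u0 differentiable (at x within {x1..x2})"
    and "\<forall>x\<in>{x1..x2}. (\<lambda>t. p t * dI x1 x2 u0 t) differentiable (at x within {x1..x2})"
    and "\<forall>x\<in>{x1..x2}. Lop x1 x2 p q u0 x = 0"
  shows "\<forall>x\<in>{x1..x2}.
      Lop x1 x2 p q (\<lambda>t. u0 t * Xtilde x1 x2 x0 p u0 r s (\<lambda>i. 2 * int (n i)) t) x
      = 2 * of_nat (sum n UNIV) * (2 * of_nat (sum n UNIV) - 1) *
        (\<Sum>i\<in>UNIV. Rop x1 x2 r s i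
           (\<lambda>t. u0 t * Xtilde x1 x2 x0 p u0 r s (\<lambda>k. 2 * int (n k) - 2 * delta i k) t) x)
    \<and> Lop x1 x2 p q (\<lambda>t. u0 t * Xpow x1 x2 x0 p u0 r s (\<lambda>i. 2 * int (n i)) t) x
      = (2 * of_nat (sum n UNIV) + 1) * (2 * of_nat (sum n UNIV)) *
        (\<Sum>i\<in>UNIV. Rop x1 x2 r s i
           (\<lambda>t. u0 t * Xpow x1 x2 x0 p u0 r s (\<lambda>k. 2 * int (n k) - 2 * delta i k) t) x)"
proof -
  interpret sturm_liouville x1 x2 x0 p u0 r s q
    using assms by unfold_locales auto
  show ?thesis
    using Lop_u0_Xtilde_double_index Lop_u0_Xpow_double_index by blast
qed

end
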